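(* Assume the setup below and fix $\hat x\in\mathbb S^2$. (i) For every $y\in K_D^{(\hat x)}$ there exists $\epsilon_0=\epsilon_0(y)>0$ such that $\phi^{(\hat x)}_{y,\eta,\epsilon}\in\mathrm{Range}(L_D^{(\hat x)})$ for all $\epsilon\in(0,\epsilon_0)$ and all $\eta\in[t_{\min},t_{\max})$. (ii) Let $\eta\in[t_{\min},t_{\max})$. If $y\notin\overline{K_{D,\eta}^{(\hat x)}}$, then $\phi^{(\hat x)}_{y,\eta,\epsilon}\notin\mathrm{Range}(L_D^{(\hat x)})$ for all $\epsilon>0$.
   Context: $D\subset\mathbb R^3$ is a bounded Lipschitz domain (open and connected) with $\mathbb R^3\setminus\overline D$ connected; $0\le t_{\min}<t_{\max}$; $S\in C([t_{\min},t_{\max}];L^\infty(D))$ is real-valued with $S\ge c_0>0$ a.e. on $D\times[t_{\min},t_{\max}]$. Let $0\le k_{\min}<k_{\max}$, $K=(k_{\max}-k_{\min})/2$, $X_D=L^2(D\times(t_{\min},t_{\max}))$, and $L_D^{(\hat x)}:X_D\to L^2(0,K)$, $(L_D^{(\hat x)}u)(\tau)=\int_{t_{\min}}^{t_{\max}}\int_D e^{{\rm i}\tau(t-\hat x\cdot y)}u(y,t)\,dy\,dt$. $\hat x\cdot D=\{\hat x\cdot y:y\in D\}$. In this setting (terminal moment $t_{\max}$ known) the test function is, for $\eta<t_{\max}$, $\epsilon>0$, $y\in\mathbb R^3$: $\phi^{(\hat x)}_{y,\eta,\epsilon}(k)=\frac{1}{(t_{\max}-\eta)|B_\epsilon(y)|}\int_{\eta}^{t_{\max}}\int_{B_\epsilon(y)}e^{{\rm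 i}k(t-\hat x\cdot z)}\,dz\,dt$, $k\in[0,K]$, with $B_\epsilon(y)$ the open ball and $|B_\epsilon(y)|$ its volume. The strips are $K_D^{(\hat x)}=\{y:\inf(\hat x\cdot D)<\hat x\cdot y<\sup(\hat x\cdot D)\}$ and $K_{D,\eta}^{(\hat x)}=\{y\in\mathbb R^3:\inf(\hat x\cdot D)<\hat x\cdot y<\sup(\hat x\cdot D)-t_{\min}+\eta\}$. *)

theory Defs
  imports "HOL-Analysis.Analysis"
begin

definition lipschitz_boundary :: "(real^3) set \<Rightarrow> bool" where
  "lipschitz_boundary D \<longleftrightarrow>
     (\<forall>p \<in> frontier D. \<exists>(R :: real^3 \<Rightarrow> real^3) (a::real) (L::real) (g :: real \<Rightarrow> real \<Rightarrow> real).
        orthogonal_transformation R \<and> a > 0 \<and>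
        (\<forall>s1 s2 r1 r2. \<bar>g s1 s2 - g r1 r2\<bar> \<le> L * sqrt ((s1 - r1)^2 + (s2 - r2)^2)) \<and>
        (\<forall>x. (\<forall>i::3. \<bar>(R (x - p)) $ i\<bar> < a) \<longrightarrow>
             (x \<in> D \<longleftrightarrow> (R (x - p)) $ 3 < g ((R (x - p)) $ 1) ((R (x - p)) $ 2))))"

definition bounded_lipschitz_domain :: "(real^3) set \<Rightarrow> bool" where
  "bounded_lipschitz_domain D \<longleftrightarrow>
     open D \<and> connected D \<and> D \<noteq> {} \<and> bounded D \<and> lipschitz_boundary D"

definition L2_D :: "(real^3) set \<Rightarrow> real \<Rightarrow> real \<Rightarrow> (((real^3) \<times> real) \<Rightarrow> complex) set" where
  "L2_D D tmin tmax =
     {u. set_borel_measurable lborel (D \<times> {tmin<..<tmax}) u \<and>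
         set_integrable lborel (D \<times> {tmin<..<tmax}) (\<lambda>p. (norm (u p))^2)}"

definition L_op :: "real^3 \<Rightarrow> (real^3) set \<Rightarrow> real \<Rightarrow> real \<Rightarrow> (((real^3) \<times> real) \<Rightarrow> complex) \<Rightarrow> real \<Rightarrow> complex" where
  "L_op xhat D tmin tmax u \<tau> =
     (LINT p:(D \<times> {tmin<..<tmax})|lborel.
        exp (\<i> * complex_of_real (\<tau> * (snd p - xhat \<bullet> fst p))) * u p)"

text \<open>Range of L_D as an operator X_D -> L^2(0,K): equality in L^2(0,K), i.e. a.e. on (0,K).\<close>
definition in_range_L :: "real^3 \<Rightarrow> (real^3) set \<Rightarrow> real \<Rightarrow> real \<Rightarrow> real \<Rightarrow> (real \<Rightarrow> complex) \<Rightarrow> bool" where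
  "in_range_L xhat D tmin tmax K f \<longleftrightarrow>
     (\<exists>u \<in> L2_D D tmin tmax.
        AE \<tau> in lborel. \<tau> \<in> {0<..<K} \<longrightarrow> L_op xhat D tmin tmax u \<tau> = f \<tau>)"

definition test_fun :: "real^3 \<Rightarrow> real \<Rightarrow> real^3 \<Rightarrow> real \<Rightarrow> real \<Rightarrow> real \<Rightarrow> complex" where
  "test_fun xhat tmax y \<eta> \<epsilon> k =
     complex_of_real (1 / ((tmax - \<eta>) * measure lborel (ball y \<epsilon>))) *
     (LINT p:(ball y \<epsilon> \<times> {\<eta><..<tmax})|lborel.
        exp (\<i> * complex_of_real (k * (snd p - xhat \<bullet> fst p))))"

definition strip_K :: "real^3 \<Rightarrow> (real^3) set \<Rightarrow> (real^3) set" where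
  "strip_K xhat D = {y. Inf ((\<lambda>z. xhat \<bullet> z) ` D) < xhat \<bullet> y \<and> xhat \<bullet> y < Sup ((\<lambda>z. xhat \<bullet> z) ` D)}"

definition strip_K_eta :: "real^3 \<Rightarrow> (real^3) set \<Rightarrow> real \<Rightarrow> real \<Rightarrow> (real^3) set" where
  "strip_K_eta xhat D tmin \<eta> =
     {y. Inf ((\<lambda>z. xhat \<bullet> z) ` D) < xhat \<bullet> y \<and> xhat \<bullet> y < Sup ((\<lambda>z. xhat \<bullet> z) ` D) - tmin + \<eta>}"

end

theory Submission
  imports Defs "HOL-Probability.Characteristic_Functions"
begin

text \<open>
  Both \<open>L_op u\<close> and the test function are Fourier transforms, at frequencies \<open>\<tau> \<in> (0, K)\<close>, of
  complex measures on the line: the pushforwards of \<open>u\<close> and of the normalised indicator of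
  \<open>ball y \<epsilon> \<times> (\<eta>, tmax)\<close> along the phase \<open>(z, t) \<mapsto> t - xhat \<bullet> z\<close>.

  (i) For \<open>y\<close> in the strip, connectedness of \<open>D\<close> gives \<open>z \<in> D\<close> with \<open>xhat \<bullet> z = xhat \<bullet> y\<close>.
  Translation by \<open>y - z\<close> is orthogonal to \<open>xhat\<close> and leaves the phase unchanged, so the test
  function at \<open>y\<close> equals the one at \<open>z\<close>; once \<open>ball z \<epsilon> \<subseteq> D\<close>, the latter is the image of its own
  density.

  (ii) The pushforwards have compact support, so their Fourier transforms are Lipschitz, and
  agreement a.e. on \<open>(0, K)\<close> is agreement everywhere there. Difference quotients make all
  derivatives agree, letting \<open>\<tau> \<rightarrow> 0\<close> all moments agree, and by Weierstrass the two measures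
  integrate every continuous function alike. But \<open>u\<close> only charges phases in
  \<open>[tmin - Sup (xhat \<bullet> D), tmax - Inf (xhat \<bullet> D)]\<close>, whereas for \<open>y\<close> outside the closed strip
  the test density charges phases outside this interval, and a continuous bump there separates
  the two measures.
\<close>

lemma AE_not_in_open_imp_empty:
  fixes U :: "'a::euclidean_space set"
  assumes "open U" and "AE x in lborel. x \<notin> U"
  shows "U = {}"
proof -
  have "emeasure lborel U = 0"
    using AE_iff_measurable[of U lborel "\<lambda>x. x \<notin> U"] assms by auto
  then have "U \<in> null_sets lborel"
    using assms(1) by auto
  then have "negligible U"
    by (simp add: negligible_iff_null_sets null_sets_completionI)
  then show ?thesis
    using open_not_negligible assms(1) by blast
qed

lemma integral_pos_if_pos_on_open:
  fixes g :: "'a::euclidean_space \<Rightarrow> real"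
  assumes "integrable lborel g" and "\<And>x. 0 \<le> g x"
    and "open U" "U \<noteq> {}" and "\<And>x. x \<in> U \<Longrightarrow> 0 < g x"
  shows "0 < integral\<^sup>L lborel g"
proof -
  have "integral\<^sup>L lborel g \<noteq> 0"
  proof
    assume "integral\<^sup>L lborel g = 0"
    then have "AE x in lborel. g x = 0"
      using integral_nonneg_eq_0_iff_AE[OF assms(1)] assms(2) by simp
    then have "AE x in lborel. x \<notin> U"
      by eventually_elim (use assms(5) in force)
    then show False using AE_not_in_open_imp_empty assms(3,4) by blast
  qed
  moreover have "0 \<le> integral\<^sup>L lborel g"
    using assms(2) by (intro integral_nonneg_AE) auto
  ultimately show ?thesis by simp
qed

lemma integrable_mult_indicator_bounded:
  fixes f :: "'a::euclidean_space \<Rightarrow> real"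
  assumes "continuous_on UNIV f" and "bounded A" and "A \<in> sets borel"
  shows "integrable lborel (\<lambda>x. f x * indicator A x)"
proof -
  have "(\<lambda>x. f x * indicator A x) = (\<lambda>x. indicator A x *\<^sub>R (indicator (closure A) x *\<^sub>R f x))"
    using closure_subset[of A] by (intro ext) (auto simp: indicator_def)
  moreover have "A \<in> sets lborel"
    using assms(3) by simp
  moreover have "integrable lborel (\<lambda>x. indicator (closure A) x *\<^sub>R f x)"
    using assms(1,2) by (intro borel_integrable_compact) (auto intro: continuous_on_subset)
  ultimately show ?thesis
    by (simp only: integrable_mult_indicator)
qed

lemma integral_lborel_translate:
  fixes f :: "'a::euclidean_space \<Rightarrow> 'b::{banach, second_countable_topology}"
  assumes "f \<in> borel_measurable borel"
  shows "(\<integral>x. f (c + x) \<partial>lborel) = (\<integral>x. f x \<partial>lborel)"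
proof -
  have "(\<integral>x. f (c + x) \<partial>lborel) = integral\<^sup>L (distr lborel borel ((+) c)) f"
    using assms by (intro integral_distr[symmetric]) auto
  then show ?thesis by (simp add: lborel_distr_plus)
qed

lemma closure_slab:
  fixes a :: "'a::euclidean_space"
  assumes "a \<noteq> 0" and "m < M"
  shows "closure {x. m < a \<bullet> x \<and> a \<bullet> x < M} = {x. m \<le> a \<bullet> x \<and> a \<bullet> x \<le> M}"
proof -
  let ?c = "((m + M) / 2 / (a \<bullet> a)) *\<^sub>R a"
  have c: "?c \<in> {x. m < a \<bullet> x} \<inter> {x. a \<bullet> x < M}"
    using assms by auto
  then have "closure ({x. m < a \<bullet> x} \<inter> {x. a \<bullet> x < M}) = closure {x. m < a \<bullet> x} \<inter> closure {x. a \<bullet> x < M}"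
    by (intro closure_Int_convex convex_halfspace_lt convex_halfspace_gt)
       (simp only: rel_interior_open[OF open_halfspace_gt] rel_interior_open[OF open_halfspace_lt], blast)
  then show ?thesis using assms(1) by (simp add: Int_def)
qed

section \<open>Fourier transforms of compactly supported complex measures on the line\<close>

lemma zero_if_norm_le_mult_small:
  fixes x :: "'a::real_normed_vector"
  assumes "0 < d" and "\<And>h. 0 < h \<Longrightarrow> h < d \<Longrightarrow> norm x \<le> A * h"
  shows "x = 0"
proof -
  have "eventually (\<lambda>h. norm x \<le> A * h) (at_right 0)"
    using assms by (intro eventually_at_rightI[of 0 d]) auto
  moreover have "((\<lambda>h. A * h) \<longlongrightarrow> 0) (at_right (0::real))"
    by (intro tendsto_eq_intros) auto
  ultimately have "norm x \<le> 0"
    by (intro tendsto_le[OF trivial_limit_at_right_real _ tendsto_const]) auto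
  then show ?thesis by simp
qed

lemma iexp_mult_add: "iexp ((t + h) * s) = iexp (t * s) * iexp (h * s)"
  by (simp add: ring_distribs exp_add)

lemma norm_iexp_minus_1_le: "cmod (iexp x - 1) \<le> \<bar>x\<bar>"
  using iexp_approx1[of x 0] by simp

lemma norm_iexp_minus_linear_le: "cmod (iexp x - (1 + \<i> * complex_of_real x)) \<le> x\<^sup>2 / 2"
  using iexp_approx1[of x 1] by (simp add: numeral_2_eq_2)

lemma norm_power_mult_iexp_minus_1_le:
  assumes "\<bar>s\<bar> \<le> r"
  shows "cmod (complex_of_real s ^ n * (iexp (\<tau> * s) - 1)) \<le> r ^ (n + 1) * \<bar>\<tau>\<bar>"
proof -
  have "cmod (complex_of_real s ^ n * (iexp (\<tau> * s) - 1)) = \<bar>s\<bar> ^ n * cmod (iexp (\<tau> * s) - 1)"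
    by (simp add: norm_mult norm_power)
  also have "\<dots> \<le> r ^ n * (\<bar>\<tau>\<bar> * r)"
  proof (intro mult_mono power_mono)
    show "cmod (iexp (\<tau> * s) - 1) \<le> \<bar>\<tau>\<bar> * r"
      using norm_iexp_minus_1_le[of "\<tau> * s"] mult_left_mono[OF assms, of "\<bar>\<tau>\<bar>"]
      by (simp add: abs_mult)
  qed (use assms in auto)
  finally show ?thesis
    by (simp add: mult_ac)
qed

lemma norm_power_mult_iexp_remainder_le:
  assumes "\<bar>s\<bar> \<le> r"
  shows "cmod (complex_of_real s ^ n * (iexp (h * s) - (1 + \<i> * complex_of_real (h * s))))
    \<le> r ^ (n + 2) * h\<^sup>2 / 2"
proof -
  have "cmod (complex_of_real s ^ n * (iexp (h * s) - (1 + \<i> * complex_of_real (h * s))))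
      = \<bar>s\<bar> ^ n * cmod (iexp (h * s) - (1 + \<i> * complex_of_real (h * s)))"
    by (simp add: norm_mult norm_power)
  also have "\<dots> \<le> r ^ n * ((h * s)\<^sup>2 / 2)"
    using assms by (intro mult_mono power_mono norm_iexp_minus_linear_le) auto
  also have "\<dots> \<le> r ^ n * ((h * r)\<^sup>2 / 2)"
    using assms
    by (intro mult_left_mono divide_right_mono)
       (auto simp: abs_mult simp flip: abs_le_square_iff intro: mult_left_mono)
  also have "\<dots> = r ^ (n + 2) * h\<^sup>2 / 2"
    by (simp add: power_mult_distrib power_add power2_eq_square)
  finally show ?thesis .
qed

text \<open>The complex measure with density \<open>w\<close> with respect to \<open>M\<close>, pushed forward along \<open>\<sigma>\<close>;
  it is supported in \<open>[a, b]\<close>, and \<open>pushforward_integral f\<close> integrates \<open>f\<close> against it.\<close>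
locale compactly_supported_pushforward =
  fixes M :: "'a measure" and \<sigma> :: "'a \<Rightarrow> real" and w :: "'a \<Rightarrow> complex" and a b :: real
  assumes integrable_weight: "integrable M w"
    and borel_measurable_map: "\<sigma> \<in> borel_measurable M"
    and support_weight: "\<And>x. x \<in> space M \<Longrightarrow> w x \<noteq> 0 \<Longrightarrow> \<sigma> x \<in> {a..b}"
begin

definition pushforward_integral :: "(real \<Rightarrow> complex) \<Rightarrow> complex" where
  "pushforward_integral f = (\<integral>x. f (\<sigma> x) * w x \<partial>M)"

definition mass :: real where
  "mass = (\<integral>x. norm (w x) \<partial>M)"

definition radius :: real where
  "radius = max \<bar>a\<bar> \<bar>b\<bar>"

lemma mass_nonneg: "0 \<le> mass"
  unfolding mass_def by (intro integral_nonneg_AE) auto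

lemma radius_nonneg: "0 \<le> radius"
  unfolding radius_def by auto

lemma abs_le_radius: "s \<in> {a..b} \<Longrightarrow> \<bar>s\<bar> \<le> radius"
  unfolding radius_def by auto

lemma norm_integrand_le:
  assumes "\<And>s. s \<in> {a..b} \<Longrightarrow> norm (f s) \<le> B" and "x \<in> space M"
  shows "norm (f (\<sigma> x) * w x) \<le> B * norm (w x)"
proof (cases "w x = 0")
  case False
  then show ?thesis
    using assms support_weight[of x] by (simp add: norm_mult mult_right_mono)
qed simp

lemma integrable_pushforward:
  assumes "continuous_on UNIV f"
  shows "integrable M (\<lambda>x. f (\<sigma> x) * w x)"
proof -
  have "compact (f ` {a..b})"
    using assms by (intro compact_continuous_image) (auto intro: continuous_on_subset)
  then obtain B where B: "\<And>s. s \<in> {a..b} \<Longrightarrow> norm (f s) \<le> B"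
    by (meson compact_imp_bounded bounded_iff image_eqI)
  show ?thesis
  proof (rule Bochner_Integration.integrable_bound)
    show "integrable M (\<lambda>x. B * norm (w x))"
      using integrable_weight by auto
    show "(\<lambda>x. f (\<sigma> x) * w x) \<in> borel_measurable M"
      using borel_measurable_continuous_onI[OF assms] borel_measurable_map integrable_weight
      by measurable
    show "AE x in M. norm (f (\<sigma> x) * w x) \<le> norm (B * norm (w x))"
      using norm_integrand_le[OF B] by (intro AE_I2) force
  qed
qed

lemma norm_pushforward_integral_le:
  assumes "continuous_on UNIV f" and "\<And>s. s \<in> {a..b} \<Longrightarrow> norm (f s) \<le> B"
  shows "norm (pushforward_integral f) \<le> B * mass"
proof -
  have "norm (pushforward_integral f) \<le> (\<integral>x. norm (f (\<sigma> x) * w x) \<partial>M)"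
    unfolding pushforward_integral_def by (rule integral_norm_bound)
  also have "\<dots> \<le> (\<integral>x. B * norm (w x) \<partial>M)"
    using integrable_pushforward[OF assms(1)] integrable_weight norm_integrand_le[OF assms(2)]
    by (intro integral_mono) auto
  finally show ?thesis by (simp add: mass_def)
qed

lemma pushforward_integral_diff:
  assumes "continuous_on UNIV f" and "continuous_on UNIV g"
  shows "pushforward_integral (\<lambda>s. f s - g s) = pushforward_integral f - pushforward_integral g"
  unfolding pushforward_integral_def
  using integrable_pushforward[OF assms(1)] integrable_pushforward[OF assms(2)]
  by (simp add: left_diff_distrib)

lemma pushforward_integral_mult_left:
  "pushforward_integral (\<lambda>s. c * f s) = c * pushforward_integral f"
  unfolding pushforward_integral_def by (simp add: mult.assoc)

lemma pushforward_integral_sum: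
  assumes "\<And>i. i \<in> I \<Longrightarrow> continuous_on UNIV (f i)"
  shows "pushforward_integral (\<lambda>s. \<Sum>i\<in>I. f i s) = (\<Sum>i\<in>I. pushforward_integral (f i))"
  unfolding pushforward_integral_def using integrable_pushforward[OF assms]
  by (simp add: sum_distrib_right)

lemma fourier_transform_lipschitz:
  "norm (pushforward_integral (\<lambda>s. iexp (\<tau> * s)) - pushforward_integral (\<lambda>s. iexp (\<tau>' * s)))
     \<le> mass * radius * \<bar>\<tau> - \<tau>'\<bar>"
proof -
  have "norm (iexp (\<tau> * s) - iexp (\<tau>' * s)) \<le> radius * \<bar>\<tau> - \<tau>'\<bar>" if s: "s \<in> {a..b}" for s
  proof -
    have "iexp (\<tau> * s) - iexp (\<tau>' * s) = iexp (\<tau>' * s) * (iexp ((\<tau> - \<tau>') * s) - 1)"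
      using iexp_mult_add[of \<tau>' "\<tau> - \<tau>'" s] by (simp add: algebra_simps)
    then have "norm (iexp (\<tau> * s) - iexp (\<tau>' * s)) = cmod (iexp ((\<tau> - \<tau>') * s) - 1)"
      by (simp add: norm_mult)
    also have "\<dots> \<le> \<bar>\<tau> - \<tau>'\<bar> * \<bar>s\<bar>"
      using norm_iexp_minus_1_le[of "(\<tau> - \<tau>') * s"] by (simp only: abs_mult)
    also have "\<dots> \<le> radius * \<bar>\<tau> - \<tau>'\<bar>"
      using abs_le_radius[OF s] by (simp add: mult.commute mult_right_mono)
    finally show ?thesis .
  qed
  moreover have c: "continuous_on UNIV (\<lambda>s. iexp (t * s))" for t
    by (intro continuous_intros)
  ultimately have "norm (pushforward_integral (\<lambda>s. iexp (\<tau> * s) - iexp (\<tau>' * s)))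
      \<le> radius * \<bar>\<tau> - \<tau>'\<bar> * mass"
    by (intro norm_pushforward_integral_le continuous_on_diff)
  then show ?thesis
    unfolding pushforward_integral_diff[OF c c] by (simp add: mult_ac)
qed

lemma fourier_transform_vanishes_if_AE:
  assumes "AE \<tau> in lborel. \<tau> \<in> {0<..<K} \<longrightarrow> pushforward_integral (\<lambda>s. iexp (\<tau> * s)) = 0"
    and "\<tau> \<in> {0<..<K}"
  shows "pushforward_integral (\<lambda>s. iexp (\<tau> * s)) = 0"
proof -
  let ?F = "\<lambda>\<tau>. pushforward_integral (\<lambda>s. iexp (\<tau> * s))"
  have "(mass * radius)-lipschitz_on UNIV ?F"
    using fourier_transform_lipschitz mass_nonneg radius_nonneg
    by (intro lipschitz_onI) (auto simp: dist_norm)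
  then have "continuous_on UNIV ?F"
    by (rule lipschitz_on_continuous_on)
  then have "open ({0<..<K} \<inter> ?F -` (- {0}))"
    by (intro open_Int open_vimage) auto
  moreover have "AE \<tau> in lborel. \<tau> \<notin> {0<..<K} \<inter> ?F -` (- {0})"
    using assms(1) by eventually_elim auto
  ultimately have "{0<..<K} \<inter> ?F -` (- {0}) = {}"
    by (rule AE_not_in_open_imp_empty)
  then show ?thesis using assms(2) by blast
qed

text \<open>Difference quotients in \<open>\<tau>\<close>: the \<open>n\<close>-th derivative of the Fourier transform is the
  transform of \<open>(\<i> s)\<^sup>n\<close> times the measure, so it vanishes wherever the transform does.\<close>
lemma fourier_transform_moments_vanish:
  assumes "\<And>\<tau>. \<tau> \<in> {0<..<K} \<Longrightarrow> pushforward_integral (\<lambda>s. iexp (\<tau> * s)) = 0"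
    and "\<tau> \<in> {0<..<K}"
  shows "pushforward_integral (\<lambda>s. complex_of_real s ^ n * iexp (\<tau> * s)) = 0"
  using assms(2)
proof (induction n arbitrary: \<tau>)
  case 0
  then show ?case using assms(1) by simp
next
  case (Suc n)
  let ?P = "\<lambda>n t s. complex_of_real s ^ n * iexp (t * s)"
  have cont: "continuous_on UNIV (?P n t)" for n t
    by (intro continuous_intros)
  show ?case
  proof (rule zero_if_norm_le_mult_small)
    show "0 < K - \<tau>" using Suc.prems by auto
    fix h :: real assume h: "0 < h" "h < K - \<tau>"
    define q where "q s = ?P n (\<tau> + h) s - ?P n \<tau> s - (\<i> * h) * ?P (Suc n) \<tau> s" for s
    have "pushforward_integral q = pushforward_integral (?P n (\<tau> + h)) - pushforward_integral (?P n \<tau>)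
        - (\<i> * h) * pushforward_integral (?P (Suc n) \<tau>)"
      unfolding q_def
      by (simp only: pushforward_integral_diff cont continuous_on_diff continuous_on_mult_left
          pushforward_integral_mult_left)
    also have "\<dots> = - (\<i> * h) * pushforward_integral (?P (Suc n) \<tau>)"
      using Suc.IH[of "\<tau> + h"] Suc.IH[of \<tau>] Suc.prems h by simp
    finally have "norm (pushforward_integral q) = h * norm (pushforward_integral (?P (Suc n) \<tau>))"
      using h by (simp add: norm_mult)
    moreover have "norm (pushforward_integral q) \<le> radius ^ (n + 2) * h\<^sup>2 / 2 * mass"
    proof (rule norm_pushforward_integral_le)
      show "continuous_on UNIV q" unfolding q_def by (intro continuous_intros)
      fix s :: real assume "s \<in> {a..b}"
      have "q s = iexp (\<tau> * s) * (complex_of_real s ^ n * (iexp (h * s) - (1 + \<i> * complex_of_real (h * s))))"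
        unfolding q_def iexp_mult_add by (simp add: algebra_simps)
      then have "norm (q s) = cmod (complex_of_real s ^ n * (iexp (h * s) - (1 + \<i> * complex_of_real (h * s))))"
        by (simp add: norm_mult)
      also have "\<dots> \<le> radius ^ (n + 2) * h\<^sup>2 / 2"
        using abs_le_radius[OF \<open>s \<in> {a..b}\<close>] by (rule norm_power_mult_iexp_remainder_le)
      finally show "norm (q s) \<le> radius ^ (n + 2) * h\<^sup>2 / 2" .
    qed
    ultimately show "norm (pushforward_integral (?P (Suc n) \<tau>)) \<le> mass * radius ^ (n + 2) / 2 * h"
      using h by (simp add: power2_eq_square algebra_simps)
  qed
qed

lemma moments_vanish:
  assumes "0 < K" and "\<And>\<tau>. \<tau> \<in> {0<..<K} \<Longrightarrow> pushforward_integral (\<lambda>s. iexp (\<tau> * s)) = 0"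
  shows "pushforward_integral (\<lambda>s. complex_of_real s ^ n) = 0"
proof (rule zero_if_norm_le_mult_small)
  show "0 < K" by fact
  fix \<tau> :: real assume \<tau>: "0 < \<tau>" "\<tau> < K"
  define q where "q s = complex_of_real s ^ n - complex_of_real s ^ n * iexp (\<tau> * s)" for s
  have cont: "continuous_on UNIV (\<lambda>s. complex_of_real s ^ n)"
    "continuous_on UNIV (\<lambda>s. complex_of_real s ^ n * iexp (\<tau> * s))"
    by (intro continuous_intros)+
  have "pushforward_integral q = pushforward_integral (\<lambda>s. complex_of_real s ^ n)"
    unfolding q_def pushforward_integral_diff[OF cont]
    using fourier_transform_moments_vanish[where K = K and \<tau> = \<tau> and n = n, OF assms(2)] \<tau>
    by simp
  moreover have "norm (pushforward_integral q) \<le> radius ^ (n + 1) * \<tau> * mass"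
  proof (rule norm_pushforward_integral_le)
    show "continuous_on UNIV q" unfolding q_def by (intro continuous_intros)
    fix s :: real assume "s \<in> {a..b}"
    have "norm (q s) = cmod (complex_of_real s ^ n * (iexp (\<tau> * s) - 1))"
      unfolding q_def by (simp add: algebra_simps norm_minus_commute)
    also have "\<dots> \<le> radius ^ (n + 1) * \<tau>"
      using norm_power_mult_iexp_minus_1_le[OF abs_le_radius[OF \<open>s \<in> {a..b}\<close>], of n \<tau>] \<tau> by simp
    finally show "norm (q s) \<le> radius ^ (n + 1) * \<tau>" .
  qed
  ultimately show "norm (pushforward_integral (\<lambda>s. complex_of_real s ^ n)) \<le> mass * radius ^ (n + 1) * \<tau>"
    by (simp add: mult_ac)
qed

lemma pushforward_integral_vanishes_if_fourier_vanishes: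
  assumes "0 < K" and "\<And>\<tau>. \<tau> \<in> {0<..<K} \<Longrightarrow> pushforward_integral (\<lambda>s. iexp (\<tau> * s)) = 0"
    and "continuous_on UNIV \<phi>"
  shows "pushforward_integral (\<lambda>s. complex_of_real (\<phi> s)) = 0"
proof (rule zero_if_norm_le_mult_small)
  show "(0::real) < 1" by simp
  fix e :: real assume e: "0 < e" "e < 1"
  obtain g where "polynomial_function g" and g: "\<And>s. s \<in> {a..b} \<Longrightarrow> \<bar>\<phi> s - g s\<bar> < e"
    using Stone_Weierstrass_polynomial_function[of "{a..b}" \<phi> e]
      continuous_on_subset[OF assms(3)] e
    by force
  then obtain c N where g_eq: "g = (\<lambda>s. \<Sum>i\<le>N. c i * s ^ i)"
    using real_polynomial_function_iff_sum real_polynomial_function_eq by metis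
  have cont: "continuous_on UNIV (\<lambda>s. complex_of_real (\<phi> s))"
    "continuous_on UNIV (\<lambda>s. complex_of_real (g s))"
    unfolding g_eq by (intro continuous_intros assms(3))+
  have "pushforward_integral (\<lambda>s. complex_of_real (g s))
      = pushforward_integral (\<lambda>s. \<Sum>i\<le>N. complex_of_real (c i) * complex_of_real s ^ i)"
    unfolding g_eq by simp
  also have "\<dots> = (\<Sum>i\<le>N. pushforward_integral (\<lambda>s. complex_of_real (c i) * complex_of_real s ^ i))"
    by (rule pushforward_integral_sum) (intro continuous_intros)
  also have "\<dots> = 0"
    using moments_vanish[OF assms(1,2)] by (simp add: pushforward_integral_mult_left)
  finally have "pushforward_integral (\<lambda>s. complex_of_real (\<phi> s))
      = pushforward_integral (\<lambda>s. complex_of_real (\<phi> s) - complex_of_real (g s))"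
    by (simp add: pushforward_integral_diff[OF cont])
  also have "norm \<dots> \<le> e * mass"
    using g cont by (intro norm_pushforward_integral_le continuous_on_diff)
      (auto simp flip: of_real_diff intro: less_imp_le)
  finally show "norm (pushforward_integral (\<lambda>s. complex_of_real (\<phi> s))) \<le> mass * e"
    by (simp add: mult.commute)
qed

theorem integral_vanishes_if_fourier_transform_AE_vanishes:
  assumes "0 < K"
    and "AE \<tau> in lborel. \<tau> \<in> {0<..<K} \<longrightarrow> (\<integral>x. iexp (\<tau> * \<sigma> x) * w x \<partial>M) = 0"
    and "continuous_on UNIV \<phi>"
  shows "(\<integral>x. complex_of_real (\<phi> (\<sigma> x)) * w x \<partial>M) = 0"
  using pushforward_integral_vanishes_if_fourier_vanishes fourier_transform_vanishes_if_AE assms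
  unfolding pushforward_integral_def by blast

end

lemma compactly_supported_pushforward_diff:
  assumes "compactly_supported_pushforward M \<sigma> w1 a b" and "compactly_supported_pushforward M \<sigma> w2 a b"
  shows "compactly_supported_pushforward M \<sigma> (\<lambda>x. w1 x - w2 x) a b"
    and "continuous_on UNIV f \<Longrightarrow>
      (\<integral>x. f (\<sigma> x) * (w1 x - w2 x) \<partial>M) = (\<integral>x. f (\<sigma> x) * w1 x \<partial>M) - (\<integral>x. f (\<sigma> x) * w2 x \<partial>M)"
proof -
  show "compactly_supported_pushforward M \<sigma> (\<lambda>x. w1 x - w2 x) a b"
    using assms unfolding compactly_supported_pushforward_def by fastforce
  show "(\<integral>x. f (\<sigma> x) * (w1 x - w2 x) \<partial>M) = (\<integral>x. f (\<sigma> x) * w1 x \<partial>M) - (\<integral>x. f (\<sigma> x) * w2 x \<partial>M)"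
    if "continuous_on UNIV f"
    using compactly_supported_pushforward.integrable_pushforward[OF assms(1) that]
      compactly_supported_pushforward.integrable_pushforward[OF assms(2) that]
    by (simp add: right_diff_distrib)
qed

section \<open>The far-field operator and the test functions\<close>

text \<open>The kernel of \<open>L_op\<close> and of \<open>test_fun\<close> at frequency \<open>\<tau>\<close> is \<open>iexp (\<tau> * phase xhat p)\<close>.\<close>
definition phase :: "'a::real_inner \<Rightarrow> 'a \<times> real \<Rightarrow> real" where
  "phase xhat p = snd p - xhat \<bullet> fst p"

definition test_density :: "real \<Rightarrow> 'a::euclidean_space \<Rightarrow> real \<Rightarrow> real \<Rightarrow> 'a \<times> real \<Rightarrow> complex" where
  "test_density tmax y \<eta> \<epsilon> p =
     complex_of_real (indicator (ball y \<epsilon> \<times> {\<eta><..<tmax}) p / ((tmax - \<eta>) * measure lborel (ball y \<epsilon>)))"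

lemma bounded_linear_phase: "bounded_linear (phase xhat)"
  unfolding phase_def by (intro bounded_linear_intros)

lemma continuous_on_phase: "continuous_on A (phase xhat)"
  by (intro linear_continuous_on bounded_linear_phase)

lemma borel_measurable_phase[measurable]: "phase xhat \<in> borel_measurable borel"
  by (intro borel_measurable_continuous_onI continuous_on_phase)

lemma borel_measurable_test_density[measurable]: "test_density tmax y \<eta> \<epsilon> \<in> borel_measurable borel"
proof -
  have "ball y \<epsilon> \<times> {\<eta><..<tmax} \<in> sets borel"
    by (simp add: open_Times)
  then show ?thesis
    unfolding test_density_def by measurable
qed

lemma L_op_eq_integral:
  "L_op xhat D tmin tmax u \<tau> =
     (\<integral>p. iexp (\<tau> * phase xhat p) * (indicator (D \<times> {tmin<..<tmax}) p *\<^sub>R u p) \<partial>lborel)"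
  unfolding L_op_def set_lebesgue_integral_def phase_def
  by (intro Bochner_Integration.integral_cong) (auto simp: indicator_def)

lemma test_fun_eq_integral:
  "test_fun xhat tmax y \<eta> \<epsilon> \<tau> = (\<integral>p. iexp (\<tau> * phase xhat p) * test_density tmax y \<eta> \<epsilon> p \<partial>lborel)"
proof -
  let ?S = "ball y \<epsilon> \<times> {\<eta><..<tmax}"
  let ?c = "complex_of_real (1 / ((tmax - \<eta>) * measure lborel (ball y \<epsilon>)))"
  have "(\<integral>p. iexp (\<tau> * phase xhat p) * test_density tmax y \<eta> \<epsilon> p \<partial>lborel)
      = (\<integral>p. ?c * (indicator ?S p *\<^sub>R iexp (\<tau> * phase xhat p)) \<partial>lborel)"
    unfolding test_density_def by (intro Bochner_Integration.integral_cong) (auto simp: indicator_def)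
  also have "\<dots> = ?c * (\<integral>p. indicator ?S p *\<^sub>R iexp (\<tau> * phase xhat p) \<partial>lborel)"
    by (rule integral_mult_right_zero)
  also have "\<dots> = test_fun xhat tmax y \<eta> \<epsilon> \<tau>"
    unfolding test_fun_def set_lebesgue_integral_def phase_def ..
  finally show ?thesis ..
qed

lemma bounded_phase_image:
  assumes "bounded A"
  obtains R where "\<And>p. p \<in> A \<Longrightarrow> \<bar>phase xhat p\<bar> \<le> R"
  using bounded_linear_image[OF assms bounded_linear_phase[of xhat]] unfolding bounded_iff by auto

lemma compactly_supported_pushforward_phase:
  assumes "integrable lborel w" and "\<And>p. w p \<noteq> 0 \<Longrightarrow> \<bar>phase xhat p\<bar> \<le> R"
  shows "compactly_supported_pushforward lborel (phase xhat) w (- R) R"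
  using assms(1)
proof unfold_locales
  fix p assume "w p \<noteq> 0"
  then show "phase xhat p \<in> {- R..R}"
    using assms(2)[of p] by (simp add: abs_le_iff)
qed measurable

lemma integrable_indicator_ball_times:
  "integrable lborel (indicator (ball y \<epsilon> \<times> {\<eta><..<tmax}) :: 'a::euclidean_space \<times> real \<Rightarrow> real)"
  by (intro integrable_real_indicator emeasure_bounded_finite bounded_Times) (simp_all add: open_Times)

lemma integrable_test_density: "integrable lborel (test_density tmax y \<eta> \<epsilon>)"
  unfolding test_density_def complex_of_real_integrable_eq
  by (intro integrable_divide integrable_indicator_ball_times)

lemma integrable_L2_D:
  assumes "u \<in> L2_D D tmin tmax" and "bounded D" and "open D"
  shows "integrable lborel (\<lambda>p. indicator (D \<times> {tmin<..<tmax}) p *\<^sub>R u p)"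
proof (rule Bochner_Integration.integrable_bound)
  let ?S = "D \<times> {tmin<..<tmax}"
  show "integrable lborel (\<lambda>p. indicator ?S p + indicator ?S p *\<^sub>R (norm (u p))\<^sup>2)"
    using assms by (intro Bochner_Integration.integrable_add integrable_real_indicator emeasure_bounded_finite)
      (auto simp: L2_D_def set_integrable_def open_Times bounded_Times)
  show "(\<lambda>p. indicator ?S p *\<^sub>R u p) \<in> borel_measurable lborel"
    using assms(1) by (simp add: L2_D_def set_borel_measurable_def)
  have "norm (u p) \<le> 1 + (norm (u p))\<^sup>2" for p
    using zero_le_power2[of "norm (u p) - 1"] zero_le_power2[of "norm (u p)"]
    unfolding power2_diff power_one mult_1_right by linarith
  then show "AE p in lborel. norm (indicator ?S p *\<^sub>R u p) \<le> norm (indicator ?S p + indicator ?S p *\<^sub>R (norm (u p))\<^sup>2)"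
    by (intro AE_I2) (auto simp: indicator_def)
qed

section \<open>Test functions centred in the strip lie in the range\<close>

lemma phase_translate:
  assumes "xhat \<bullet> z = xhat \<bullet> y"
  shows "phase xhat ((y - z, 0) + p) = phase xhat p"
  using assms by (simp add: phase_def inner_add_right inner_diff_right)

lemma test_density_translate:
  "test_density tmax y \<eta> \<epsilon> ((y - z, 0) + p) = test_density tmax z \<eta> \<epsilon> p"
proof -
  have "(y - z, 0) + p \<in> ball y \<epsilon> \<times> {\<eta><..<tmax} \<longleftrightarrow> p \<in> ball z \<epsilon> \<times> {\<eta><..<tmax}"
    by (cases p) (simp add: dist_norm algebra_simps)
  moreover have "measure lborel (ball y \<epsilon>) = measure lborel (ball z \<epsilon>)"
    using content_ball_conv_unit_ball[of \<epsilon> y] content_ball_conv_unit_ball[of \<epsilon> z]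
    by (cases "0 \<le> \<epsilon>") (auto simp: ball_empty)
  ultimately show ?thesis
    unfolding test_density_def by (simp add: indicator_def)
qed

lemma test_fun_translate:
  assumes "xhat \<bullet> z = xhat \<bullet> y"
  shows "test_fun xhat tmax y \<eta> \<epsilon> = test_fun xhat tmax z \<eta> \<epsilon>"
proof
  fix \<tau>
  have "test_fun xhat tmax y \<eta> \<epsilon> \<tau>
      = (\<integral>p. iexp (\<tau> * phase xhat ((y - z, 0) + p)) * test_density tmax y \<eta> \<epsilon> ((y - z, 0) + p) \<partial>lborel)"
    unfolding test_fun_eq_integral by (rule integral_lborel_translate[symmetric]) measurable
  then show "test_fun xhat tmax y \<eta> \<epsilon> \<tau> = test_fun xhat tmax z \<eta> \<epsilon> \<tau>"
    by (simp add: phase_translate[OF assms] test_density_translate test_fun_eq_integral)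
qed

lemma indicator_scaleR_test_density:
  assumes "ball y \<epsilon> \<subseteq> D" and "tmin \<le> \<eta>"
  shows "indicator (D \<times> {tmin<..<tmax}) p *\<^sub>R test_density tmax y \<eta> \<epsilon> p = test_density tmax y \<eta> \<epsilon> p"
  using assms by (auto simp: test_density_def indicator_def)

lemma test_density_in_L2_D:
  assumes "ball y \<epsilon> \<subseteq> D" and "tmin \<le> \<eta>"
  shows "test_density tmax y \<eta> \<epsilon> \<in> L2_D D tmin tmax"
proof (unfold L2_D_def set_borel_measurable_def set_integrable_def, intro CollectI conjI)
  let ?S = "ball y \<epsilon> \<times> {\<eta><..<tmax}"
  let ?c = "1 / ((tmax - \<eta>) * measure lborel (ball y \<epsilon>))"
  have "(\<lambda>p. indicator (D \<times> {tmin<..<tmax}) p *\<^sub>R test_density tmax y \<eta> \<epsilon> p)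
      = test_density tmax y \<eta> \<epsilon>"
    using indicator_scaleR_test_density[OF assms] by (rule ext)
  then show "(\<lambda>p. indicator (D \<times> {tmin<..<tmax}) p *\<^sub>R test_density tmax y \<eta> \<epsilon> p) \<in> borel_measurable lborel"
    by simp
  have square: "(\<lambda>p. indicator (D \<times> {tmin<..<tmax}) p *\<^sub>R (cmod (test_density tmax y \<eta> \<epsilon> p))\<^sup>2)
      = (\<lambda>p. ?c\<^sup>2 * indicator ?S p)"
  proof
    fix p
    show "indicator (D \<times> {tmin<..<tmax}) p *\<^sub>R (cmod (test_density tmax y \<eta> \<epsilon> p))\<^sup>2
        = ?c\<^sup>2 * indicator ?S p"
    proof (cases "p \<in> ?S")
      case True
      then have "p \<in> D \<times> {tmin<..<tmax}" using assms by auto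
      with True show ?thesis
        unfolding test_density_def norm_of_real power2_abs by (simp add: power_divide)
    qed (simp add: test_density_def)
  qed
  show "integrable lborel
      (\<lambda>p. indicator (D \<times> {tmin<..<tmax}) p *\<^sub>R (cmod (test_density tmax y \<eta> \<epsilon> p))\<^sup>2)"
    unfolding square by (intro integrable_mult_right integrable_indicator_ball_times)
qed

lemma test_fun_in_range:
  assumes "xhat \<bullet> z = xhat \<bullet> y" and "ball z \<epsilon> \<subseteq> D" and "tmin \<le> \<eta>"
  shows "in_range_L xhat D tmin tmax K (test_fun xhat tmax y \<eta> \<epsilon>)"
proof -
  have "L_op xhat D tmin tmax (test_density tmax z \<eta> \<epsilon>) \<tau> = test_fun xhat tmax z \<eta> \<epsilon> \<tau>" for \<tau>
    unfolding L_op_eq_integral test_fun_eq_integral indicator_scaleR_test_density[OF assms(2,3)] ..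
  then show ?thesis
    unfolding in_range_L_def test_fun_translate[OF assms(1)]
    using test_density_in_L2_D[OF assms(2,3)] by (intro bexI[of _ "test_density tmax z \<eta> \<epsilon>"]) simp_all
qed

lemma bounded_inner_image: "bounded D \<Longrightarrow> bounded ((\<lambda>z. xhat \<bullet> z) ` D)"
  by (intro bounded_linear_image bounded_linear_inner_right)

lemma Inf_le_inner_le_Sup:
  assumes "bounded D" and "z \<in> D"
  shows "Inf ((\<lambda>z. xhat \<bullet> z) ` D) \<le> xhat \<bullet> z" and "xhat \<bullet> z \<le> Sup ((\<lambda>z. xhat \<bullet> z) ` D)"
  using assms bounded_inner_image[OF assms(1), of xhat]
  by (auto intro!: cInf_lower cSup_upper bounded_imp_bdd_below bounded_imp_bdd_above)

lemma strip_K_level_point: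
  assumes "bounded D" and "connected D" and "D \<noteq> {}" and "y \<in> strip_K xhat D"
  obtains z where "z \<in> D" and "xhat \<bullet> z = xhat \<bullet> y"
proof -
  let ?I = "(\<lambda>z. xhat \<bullet> z) ` D"
  have bdd: "bdd_below ?I" "bdd_above ?I"
    using bounded_inner_image[OF assms(1)] by (auto intro: bounded_imp_bdd_below bounded_imp_bdd_above)
  obtain z1 where "z1 \<in> D" "xhat \<bullet> z1 \<le> xhat \<bullet> y"
    using assms(3,4) cInf_less_iff[OF _ bdd(1)] by (force simp: strip_K_def)
  moreover obtain z2 where "z2 \<in> D" "xhat \<bullet> y \<le> xhat \<bullet> z2"
    using assms(3,4) less_cSup_iff[OF _ bdd(2)] by (force simp: strip_K_def)
  ultimately show ?thesis
    using connected_ivt_hyperplane[OF assms(2)] that by metis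
qed

section \<open>Test functions centred away from the strip are not in the range\<close>

lemma Inf_less_Sup_inner_image:
  assumes "bounded D" and "open D" and "D \<noteq> {}" and "xhat \<noteq> 0"
  shows "Inf ((\<lambda>z. xhat \<bullet> z) ` D) < Sup ((\<lambda>z. xhat \<bullet> z) ` D)"
proof -
  obtain z where z: "z \<in> D"
    using assms(3) by blast
  obtain r where r: "0 < r" "ball z r \<subseteq> D"
    using openE[OF assms(2) z] .
  define z' where "z' = z + (r / (2 * norm xhat)) *\<^sub>R xhat"
  have "dist z z' = r / 2"
    using assms(4) r(1) by (simp add: z'_def dist_norm)
  then have "z' \<in> D"
    using r by auto
  have "xhat \<bullet> z' = xhat \<bullet> z + r / (2 * norm xhat) * (xhat \<bullet> xhat)"
    by (simp add: z'_def inner_add_right)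
  then have "xhat \<bullet> z < xhat \<bullet> z'"
    using assms(4) r(1) by simp
  then show ?thesis
    using Inf_le_inner_le_Sup[OF assms(1) z, where xhat = xhat]
      Inf_le_inner_le_Sup[OF assms(1) \<open>z' \<in> D\<close>, where xhat = xhat] by linarith
qed

lemma not_in_closure_strip_K_eta:
  assumes "bounded D" and "open D" and "D \<noteq> {}" and "xhat \<noteq> 0" and "tmin \<le> \<eta>"
    and "y \<notin> closure (strip_K_eta xhat D tmin \<eta>)"
  shows "xhat \<bullet> y < Inf ((\<lambda>z. xhat \<bullet> z) ` D) \<or> Sup ((\<lambda>z. xhat \<bullet> z) ` D) - tmin + \<eta> < xhat \<bullet> y"
proof -
  have slab: "Inf ((\<lambda>z. xhat \<bullet> z) ` D) < Sup ((\<lambda>z. xhat \<bullet> z) ` D) - tmin + \<eta>"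
    using Inf_less_Sup_inner_image[OF assms(1-4)] assms(5) by linarith
  show ?thesis
    using assms(6) unfolding strip_K_eta_def closure_slab[OF assms(4) slab] by auto
qed

lemma phase_mem_interval:
  assumes "bounded D" and "p \<in> D \<times> {tmin<..<tmax}"
  shows "phase xhat p \<in> {tmin - Sup ((\<lambda>z. xhat \<bullet> z) ` D) .. tmax - Inf ((\<lambda>z. xhat \<bullet> z) ` D)}"
  using assms Inf_le_inner_le_Sup[OF assms(1), of "fst p" xhat] by (auto simp: phase_def)

lemma exists_time_outside_phase_interval:
  fixes v m M \<eta> tmin tmax :: real
  assumes "v < m \<or> M - tmin + \<eta> < v" and "\<eta> < tmax"
  shows "\<exists>t \<in> {\<eta><..<tmax}. t - v \<notin> {tmin - M..tmax - m}"
  using assms(1)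
proof
  assume "v < m"
  define d where "d = min (tmax - \<eta>) (m - v) / 2"
  have "0 < d" "d < tmax - \<eta>" "d < m - v"
    using \<open>v < m\<close> assms(2) by (auto simp: d_def)
  then show ?thesis
    by (intro bexI[of _ "tmax - d"]) auto
next
  assume "M - tmin + \<eta> < v"
  define d where "d = min (tmax - \<eta>) (v - (M - tmin + \<eta>)) / 2"
  have "0 < d" "d < tmax - \<eta>" "d < v - (M - tmin + \<eta>)"
    using \<open>M - tmin + \<eta> < v\<close> assms(2) by (auto simp: d_def)
  then show ?thesis
    by (intro bexI[of _ "\<eta> + d"]) auto
qed

lemma integral_phase_indicator_pos:
  fixes \<psi> :: "real \<Rightarrow> real"
  assumes "continuous_on UNIV \<psi>" and "\<And>s. 0 \<le> \<psi> s"
    and "0 < \<epsilon>" and "t \<in> {\<eta><..<tmax}" and "0 < \<psi> (phase xhat (y, t))"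
  shows "0 < (\<integral>p. \<psi> (phase xhat p) * indicator (ball y \<epsilon> \<times> {\<eta><..<tmax}) p \<partial>lborel)"
proof -
  let ?T = "ball y \<epsilon> \<times> {\<eta><..<tmax}" and ?U = "ball y \<epsilon> \<times> {\<eta><..<tmax} \<inter> (\<lambda>p. \<psi> (phase xhat p)) -` {0<..}"
  have cont: "continuous_on UNIV (\<lambda>p. \<psi> (phase xhat p))"
    using continuous_on_compose2[OF assms(1) continuous_on_phase] by auto
  have "(y, t) \<in> ?U"
    using assms(3-5) by simp
  then have "?U \<noteq> {}"
    by blast
  moreover have "open ?U"
    using cont by (intro open_Int open_Times open_vimage) auto
  moreover have "integrable lborel (\<lambda>p. \<psi> (phase xhat p) * indicator ?T p)"
    using cont by (intro integrable_mult_indicator_bounded) (auto simp: bounded_Times open_Times)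
  ultimately show ?thesis
    using assms(2) by (intro integral_pos_if_pos_on_open[of _ ?U]) (auto simp: indicator_def)
qed

lemma pushforward_integrals_eq_if_in_range:
  fixes D :: "(real^3) set"
  assumes "bounded D" and "open D" and "0 < K" and u: "u \<in> L2_D D tmin tmax"
    and Lu: "AE \<tau> in lborel. \<tau> \<in> {0<..<K} \<longrightarrow> L_op xhat D tmin tmax u \<tau> = test_fun xhat tmax y \<eta> \<epsilon> \<tau>"
    and "continuous_on UNIV \<psi>"
  shows "(\<integral>p. complex_of_real (\<psi> (phase xhat p)) * (indicator (D \<times> {tmin<..<tmax}) p *\<^sub>R u p) \<partial>lborel)
    = (\<integral>p. complex_of_real (\<psi> (phase xhat p)) * test_density tmax y \<eta> \<epsilon> p \<partial>lborel)"
proof -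
  let ?S = "D \<times> {tmin<..<tmax}" and ?T = "ball y \<epsilon> \<times> {\<eta><..<tmax}"
  define v where "v p = indicator ?S p *\<^sub>R u p" for p
  define \<rho> where "\<rho> = test_density tmax y \<eta> \<epsilon>"
  obtain R where R: "\<And>p. p \<in> ?S \<union> ?T \<Longrightarrow> \<bar>phase xhat p\<bar> \<le> R"
    using bounded_phase_image[of "?S \<union> ?T"] assms(1) by (auto simp: bounded_Times)
  have v: "compactly_supported_pushforward lborel (phase xhat) v (- R) R"
    using integrable_L2_D[OF u assms(1,2)] R
    by (intro compactly_supported_pushforward_phase) (auto simp: v_def[abs_def] indicator_def)
  have \<rho>: "compactly_supported_pushforward lborel (phase xhat) \<rho> (- R) R"
    using integrable_test_density R
    by (intro compactly_supported_pushforward_phase) (auto simp: \<rho>_def test_density_def indicator_def)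
  note diff = compactly_supported_pushforward_diff[OF v \<rho>]
  have "AE \<tau> in lborel. \<tau> \<in> {0<..<K} \<longrightarrow> (\<integral>p. iexp (\<tau> * phase xhat p) * (v p - \<rho> p) \<partial>lborel) = 0"
    using Lu
  proof eventually_elim
    case (elim \<tau>)
    have "continuous_on UNIV (\<lambda>s. iexp (\<tau> * s))"
      by (intro continuous_intros)
    from diff(2)[OF this] elim show ?case
      by (simp add: L_op_eq_integral test_fun_eq_integral v_def \<rho>_def)
  qed
  then have "(\<integral>p. complex_of_real (\<psi> (phase xhat p)) * (v p - \<rho> p) \<partial>lborel) = 0"
    using compactly_supported_pushforward.integral_vanishes_if_fourier_transform_AE_vanishes[OF diff(1) assms(3)]
      assms(6) by blast
  moreover have "continuous_on UNIV (\<lambda>s. complex_of_real (\<psi> s))"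
    using assms(6) by (intro continuous_intros)
  moreover note diff(2)[OF this]
  ultimately show ?thesis
    unfolding v_def \<rho>_def by simp
qed

lemma test_fun_not_in_range:
  fixes D :: "(real^3) set" and \<alpha> \<beta> :: real
  assumes "bounded D" and "open D" and "0 < K" and "0 < \<epsilon>" and "t \<in> {\<eta><..<tmax}"
    and phase_D: "\<And>p. p \<in> D \<times> {tmin<..<tmax} \<Longrightarrow> phase xhat p \<in> {\<alpha>..\<beta>}"
    and phase_y: "phase xhat (y, t) \<notin> {\<alpha>..\<beta>}"
  shows "\<not> in_range_L xhat D tmin tmax K (test_fun xhat tmax y \<eta> \<epsilon>)"
proof
  let ?S = "D \<times> {tmin<..<tmax}" and ?T = "ball y \<epsilon> \<times> {\<eta><..<tmax}"
  define c where "c = 1 / ((tmax - \<eta>) * measure lborel (ball y \<epsilon>))"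
  define \<psi> where "\<psi> s = max 0 (\<alpha> - s) + max 0 (s - \<beta>)" for s
  have \<psi>: "continuous_on UNIV \<psi>" "\<And>s. 0 \<le> \<psi> s" "\<And>s. s \<in> {\<alpha>..\<beta>} \<Longrightarrow> \<psi> s = 0"
    "0 < \<psi> (phase xhat (y, t))"
    using phase_y unfolding \<psi>_def by (intro continuous_intros | auto simp: max_def)+
  assume "in_range_L xhat D tmin tmax K (test_fun xhat tmax y \<eta> \<epsilon>)"
  then obtain u where "u \<in> L2_D D tmin tmax"
    and "AE \<tau> in lborel. \<tau> \<in> {0<..<K} \<longrightarrow> L_op xhat D tmin tmax u \<tau> = test_fun xhat tmax y \<eta> \<epsilon> \<tau>"
    unfolding in_range_L_def by blast
  from pushforward_integrals_eq_if_in_range[OF assms(1-3) this \<psi>(1)]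
  have "(\<integral>p. complex_of_real (\<psi> (phase xhat p)) * (indicator ?S p *\<^sub>R u p) \<partial>lborel)
      = (\<integral>p. complex_of_real (\<psi> (phase xhat p)) * test_density tmax y \<eta> \<epsilon> p \<partial>lborel)" .
  moreover have "complex_of_real (\<psi> (phase xhat p)) * (indicator ?S p *\<^sub>R u p) = 0" for p
    using \<psi>(3)[OF phase_D, of p] by (auto simp: indicator_def)
  moreover have "complex_of_real (\<psi> (phase xhat p)) * test_density tmax y \<eta> \<epsilon> p
      = complex_of_real (c * (\<psi> (phase xhat p) * indicator ?T p))" for p
    by (simp add: c_def test_density_def)
  ultimately have "complex_of_real (c * (\<integral>p. \<psi> (phase xhat p) * indicator ?T p \<partial>lborel)) = 0"
    by (simp only: integral_zero integral_complex_of_real integral_mult_right_zero)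
  moreover have "0 < c"
    using assms(4,5) content_ball_pos[of \<epsilon> y] by (simp add: c_def)
  ultimately show False
    using integral_phase_indicator_pos[OF \<psi>(1,2) assms(4,5) \<psi>(4)] by simp
qed

theorem mainTheorem3:
  fixes D :: "(real^3) set" and tmin tmax kmin kmax :: real and xhat :: "real^3"
  assumes "bounded_lipschitz_domain D"
    and "connected (- closure D)"
    and "0 \<le> tmin" and "tmin < tmax"
    and "0 \<le> kmin" and "kmin < kmax"
    and "norm xhat = 1"
  defines "K \<equiv> (kmax - kmin) / 2"
  shows "(\<forall>y \<in> strip_K xhat D. \<exists>\<epsilon>0 > 0. \<forall>\<epsilon> \<in> {0<..<\<epsilon>0}. \<forall>\<eta> \<in> {tmin..<tmax}.
            in_range_L xhat D tmin tmax K (test_fun xhat tmax y \<eta> \<epsilon>))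
       \<and> (\<forall>\<eta> \<in> {tmin..<tmax}. \<forall>y. y \<notin> closure (strip_K_eta xhat D tmin \<eta>) \<longrightarrow>
            (\<forall>\<epsilon> > 0. \<not> in_range_L xhat D tmin tmax K (test_fun xhat tmax y \<eta> \<epsilon>)))"
proof -
  have D: "bounded D" "open D" "connected D" "D \<noteq> {}"
    using assms(1) unfolding bounded_lipschitz_domain_def by auto
  have "xhat \<noteq> 0" and "0 < K"
    using assms(6,7) by (auto simp: K_def)
  let ?I = "(\<lambda>z. xhat \<bullet> z) ` D"
  show ?thesis
  proof (intro conjI ballI allI impI)
    fix y assume "y \<in> strip_K xhat D"
    then obtain z where z: "z \<in> D" "xhat \<bullet> z = xhat \<bullet> y"
      using strip_K_level_point[OF D(1,3,4)] by blast
    obtain \<epsilon>0 where \<epsilon>0: "0 < \<epsilon>0" "ball z \<epsilon>0 \<subseteq> D"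
      using openE[OF D(2) z(1)] .
    show "\<exists>\<epsilon>0 > 0. \<forall>\<epsilon> \<in> {0<..<\<epsilon>0}. \<forall>\<eta> \<in> {tmin..<tmax}.
        in_range_L xhat D tmin tmax K (test_fun xhat tmax y \<eta> \<epsilon>)"
    proof (intro exI[of _ \<epsilon>0] conjI ballI)
      fix \<epsilon> \<eta> assume "\<epsilon> \<in> {0<..<\<epsilon>0}" and "\<eta> \<in> {tmin..<tmax}"
      then show "in_range_L xhat D tmin tmax K (test_fun xhat tmax y \<eta> \<epsilon>)"
        using test_fun_in_range[OF z(2) order_trans[OF subset_ball \<epsilon>0(2)]] by simp
    qed (fact \<epsilon>0(1))
  next
    fix \<eta> \<epsilon> :: real and y
    assume \<eta>: "\<eta> \<in> {tmin..<tmax}" and y: "y \<notin> closure (strip_K_eta xhat D tmin \<eta>)" and "0 < \<epsilon>"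
    have "xhat \<bullet> y < Inf ?I \<or> Sup ?I - tmin + \<eta> < xhat \<bullet> y"
      using not_in_closure_strip_K_eta[OF D(1,2,4) \<open>xhat \<noteq> 0\<close> _ y] \<eta> by simp
    moreover have "\<eta> < tmax"
      using \<eta> by simp
    ultimately obtain t where t: "t \<in> {\<eta><..<tmax}" "t - xhat \<bullet> y \<notin> {tmin - Sup ?I..tmax - Inf ?I}"
      using exists_time_outside_phase_interval by blast
    then have "phase xhat (y, t) \<notin> {tmin - Sup ?I..tmax - Inf ?I}"
      by (simp add: phase_def)
    then show "\<not> in_range_L xhat D tmin tmax K (test_fun xhat tmax y \<eta> \<epsilon>)"
      using test_fun_not_in_range[OF D(1,2) \<open>0 < K\<close> \<open>0 < \<epsilon>\<close> t(1) phase_mem_interval[OF D(1)]] by blast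
  qed
qed
end
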